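(* Let $S>0$, $\zeta\in\{0,1\}$, $\phi\in\mathbb{R}$ and let $(u_n)_{n\in\mathbb{N}}$ be the $\phi$-market impact scenario defined below. (a) If $\phi\ge 1$, then $(u_n)$ is not admissible from a trading perspective. (b) If $\phi\in(-1,1)$, then $(u_n)$ is admissible from a trading perspective. (c) If $\phi\le -1$ and for every $x\in\mathbb{R}$ the sequence $(s_n(x))_{n\in\mathbb{N}}$ is bounded, then $(u_n)$ is admissible from a trading perspective. In particular, under the standing assumption that $(s_n(x))_{n}$ is bounded for every $x$ whenever $\phi\le -1$, the scenario is admissible if and only if $\phi\in(-\infty,1)$.
   Context: Fix $S>0$, $\zeta\in\{0,1\}$ and $\phi\in\mathbb{R}$. For $a,b\in\mathbb{R}$ write $a\vee b=\max(a,b)$. The $\phi$-market impact scenario starting from $x\in\mathbb{R}$ is the sequence of real-valued functions $(u_n)_{n\in\mathbb{N}}$ defined by $u_0(x)=x\vee(-S)$ and, for all $n\in\mathbb{N}$, $u_{n+1}(x)=\Big(\phi\big(1+\tfrac{s_n(x)}{S}\big)^{1+\zeta}u_n(x)\Big)\vee\big(-s_n(x)-S\big)$, where $s_n(x)=\sum_{k=0}^n u_k(x)$. The scenario is called admissible from a trading perspective if there exists $R>0$ such that for every $x\in(-R,R)$ the series $\sum_{n\ge0}u_n(x)$ converges. *)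

theory Defs
  imports "HOL-Analysis.Analysis"
begin

fun mis :: "real \<Rightarrow> nat \<Rightarrow> real \<Rightarrow> real \<Rightarrow> nat \<Rightarrow> real \<times> real" where
  "mis S zeta phi x 0 = (max x (-S), max x (-S))"
| "mis S zeta phi x (Suc n) =
     (let u = fst (mis S zeta phi x n); s = snd (mis S zeta phi x n);
          u' = max (phi * (1 + s / S) ^ (1 + zeta) * u) (- s - S)
      in (u', s + u'))"

definition mi_u :: "real \<Rightarrow> nat \<Rightarrow> real \<Rightarrow> nat \<Rightarrow> real \<Rightarrow> real" where
  "mi_u S zeta phi n x = fst (mis S zeta phi x n)"

definition mi_s :: "real \<Rightarrow> nat \<Rightarrow> real \<Rightarrow> nat \<Rightarrow> real \<Rightarrow> real" where
  "mi_s S zeta phi n x = (\<Sum>k\<le>n. mi_u S zeta phi k x)"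

definition admissible :: "real \<Rightarrow> nat \<Rightarrow> real \<Rightarrow> bool" where
  "admissible S zeta phi \<longleftrightarrow>
     (\<exists>R>0. \<forall>x. -R < x \<and> x < R \<longrightarrow> summable (\<lambda>n. mi_u S zeta phi n x))"

lemma mi_u_0: "mi_u S zeta phi 0 x = max x (-S)"
  by (simp add: mi_u_def)

lemma mis_snd: "snd (mis S zeta phi x n) = mi_s S zeta phi n x"
  by (induction n) (auto simp: mi_s_def mi_u_def Let_def)

lemma mi_u_Suc: "mi_u S zeta phi (Suc n) x =
   max (phi * (1 + mi_s S zeta phi n x / S) ^ (1 + zeta) * mi_u S zeta phi n x)
       (- mi_s S zeta phi n x - S)"
  by (simp add: mi_u_def Let_def mis_snd[symmetric])

end

theory Submission
  imports Defs
begin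

text \<open>
  For \<open>\<phi> \<ge> 1\<close> and a start \<open>x > 0\<close> every factor \<open>\<phi> (1 + s_n/S)^(1+\<zeta>)\<close> is at least 1,
  so \<open>u_n \<ge> x\<close> for all \<open>n\<close> and the series diverges.

  For \<open>|\<phi>| < 1\<close> choose \<open>d > 0\<close> with \<open>q = |\<phi>| (1 + d)^(1+\<zeta>) < 1\<close>. As long as
  \<open>|s_n| \<le> d S\<close> the next impact satisfies \<open>|u_(n+1)| \<le> q |u_n|\<close>, and for small \<open>|x|\<close> the
  resulting geometric decay keeps \<open>|s_n| \<le> |x| / (1 - q)\<close> inside that window forever.

  For \<open>\<phi> < 0\<close> the normalised position \<open>a_n = 1 + s_n/S \<ge> 0\<close> oscillates: its increments
  alternate in sign, so (possibly after dropping the first term) \<open>a_(2k)\<close> are the peaks and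
  \<open>a_(2k+1)\<close> the troughs of the path. Each swing is the previous one multiplied by
  \<open>-\<phi> a^(1+\<zeta>)\<close> at the turning point between them, so turning points below the level where this
  factor is 1 damp the oscillation and those above it amplify it. Hence peaks and troughs are
  eventually monotone and, when \<open>s_n\<close> is bounded, convergent; passing to the limit in the recursion
  shows that the two limits coincide, so \<open>s_n\<close> converges.
\<close>

lemma LIMSEQ_even_odd:
  fixes X :: "nat \<Rightarrow> 'a::topological_space"
  assumes even: "(\<lambda>n. X (2 * n)) \<longlonglongrightarrow> L" and odd: "(\<lambda>n. X (2 * n + 1)) \<longlonglongrightarrow> L"
  shows "X \<longlonglongrightarrow> L"
proof (rule topological_tendstoI)
  fix U assume "open U" "L \<in> U"
  then have "eventually (\<lambda>n. X (2 * n) \<in> U \<and> X (2 * n + 1) \<in> U) sequentially"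
    using even odd by (intro eventually_conj topological_tendstoD)
  then obtain N where N: "\<And>n. N \<le> n \<Longrightarrow> X (2 * n) \<in> U \<and> X (2 * n + 1) \<in> U"
    by (auto simp: eventually_sequentially)
  show "eventually (\<lambda>n. X n \<in> U) sequentially"
    unfolding eventually_sequentially
  proof (intro exI allI impI)
    fix n assume n: "2 * N \<le> n"
    show "X n \<in> U"
    proof (cases "even n")
      case True
      then obtain k where "n = 2 * k" ..
      with n N[of k] show ?thesis by simp
    next
      case False
      then obtain k where "n = 2 * k + 1" by (rule oddE)
      with n N[of k] show ?thesis by simp
    qed
  qed
qed

lemma convergent_if_eventually_decreasing:
  fixes X :: "nat \<Rightarrow> real"
  assumes "\<And>j. k \<le> j \<Longrightarrow> X (Suc j) \<le> X j" and "\<And>j. B \<le> X j"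
  shows "convergent X"
proof -
  have "decseq (\<lambda>j. X (j + k))"
    by (rule decseq_SucI) (simp add: assms(1))
  then have "convergent (\<lambda>j. X (j + k))"
    using decseq_convergent[of "\<lambda>j. X (j + k)" B] assms(2) by (metis convergentI)
  then show ?thesis
    by (simp add: convergent_ignore_initial_segment)
qed

lemma convergent_if_eventually_increasing:
  fixes X :: "nat \<Rightarrow> real"
  assumes "\<And>j. k \<le> j \<Longrightarrow> X j \<le> X (Suc j)" and "\<And>j. X j \<le> B"
  shows "convergent X"
proof -
  have "convergent (\<lambda>j. - X j)"
    by (rule convergent_if_eventually_decreasing[of k _ "- B"]) (simp_all add: assms)
  then show ?thesis
    using convergent_minus_iff by blast
qed

text \<open>
  \<open>P\<close> and \<open>T\<close> are the successive local maxima and minima of a nonnegative oscillation: the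
  upswing from \<open>T k\<close> is \<open>f (T k)\<close> times the preceding downswing, and the downswing from
  \<open>P (Suc k)\<close> is \<open>f (P (Suc k))\<close> times the preceding upswing, truncated at 0.
\<close>

locale peaks_troughs =
  fixes f :: "real \<Rightarrow> real" and P T :: "nat \<Rightarrow> real" and M :: real
  assumes f_0: "0 \<le> f 0" "f 0 < 1"
    and f_strict_mono: "strict_mono_on {0..} f"
    and f_continuous: "continuous_on {0..} f"
    and T_nonneg: "0 \<le> T k"
    and T_le_P: "T k \<le> P k"
    and P_le: "P k \<le> M"
    and P_Suc: "P (Suc k) - T k = f (T k) * (P k - T k)"
    and T_Suc: "P (Suc k) - T (Suc k) = min (f (P (Suc k)) * (P (Suc k) - T k)) (P (Suc k))"
begin

lemma f_mono: "0 \<le> y \<Longrightarrow> y \<le> z \<Longrightarrow> f y \<le> f z"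
  using strict_mono_on_imp_mono_on[OF f_strict_mono] by (auto intro: mono_onD)

lemma f_nonneg: "0 \<le> y \<Longrightarrow> 0 \<le> f y"
  using f_mono[of 0 y] f_0 by simp

lemma P_nonneg: "0 \<le> P k"
  using T_nonneg T_le_P order_trans by blast

lemma T_le_P_Suc: "T k \<le> P (Suc k)"
  using P_Suc[of k] f_nonneg[OF T_nonneg] T_le_P[of k] by (metis diff_ge_0_iff_ge mult_nonneg_nonneg)

lemma P_Suc_le: "f (T k) \<le> 1 \<Longrightarrow> P (Suc k) \<le> P k"
  using P_Suc[of k] T_le_P[of k] mult_right_mono[of "f (T k)" 1 "P k - T k"] by simp

lemma P_le_Suc: "1 \<le> f (T k) \<Longrightarrow> P k \<le> P (Suc k)"
  using P_Suc[of k] T_le_P[of k] mult_right_mono[of 1 "f (T k)" "P k - T k"] by simp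

lemma T_le_Suc:
  assumes "f (P (Suc k)) \<le> 1"
  shows "T k \<le> T (Suc k)"
proof -
  have "P (Suc k) - T (Suc k) \<le> f (P (Suc k)) * (P (Suc k) - T k)"
    unfolding T_Suc[of k] by (rule min.cobounded1)
  also have "\<dots> \<le> P (Suc k) - T k"
    using mult_right_mono[OF assms, of "P (Suc k) - T k"] T_le_P_Suc[of k] by simp
  finally show ?thesis by simp
qed

lemma T_Suc_le:
  assumes "1 \<le> f (P (Suc k))"
  shows "T (Suc k) \<le> T k"
proof -
  have "P (Suc k) - T k \<le> f (P (Suc k)) * (P (Suc k) - T k)"
    using mult_right_mono[OF assms, of "P (Suc k) - T k"] T_le_P_Suc[of k] by simp
  moreover have "P (Suc k) - T k \<le> P (Suc k)"
    using T_nonneg[of k] by simp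
  ultimately have "P (Suc k) - T k \<le> P (Suc k) - T (Suc k)"
    unfolding T_Suc[of k] by (rule min.boundedI)
  then show ?thesis by simp
qed

lemma f_P_le_1_persists:
  assumes "f (P k) \<le> 1" and "k \<le> j"
  shows "f (P j) \<le> 1"
  using assms(2)
proof (induction j rule: dec_induct)
  case (step j)
  have "f (T j) \<le> 1"
    using f_mono[OF T_nonneg T_le_P, of j] step.IH by linarith
  then have "P (Suc j) \<le> P j" by (rule P_Suc_le)
  then show ?case
    using f_mono[OF P_nonneg, of "Suc j" "P j"] step.IH by linarith
qed (fact assms(1))

lemma convergent_P_T_if_damped:
  assumes "f (P k) \<le> 1"
  shows "convergent P \<and> convergent T"
proof
  show "convergent P"
  proof (rule convergent_if_eventually_decreasing[of k _ 0])
    show "P (Suc j) \<le> P j" if "k \<le> j" for j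
      using f_mono[OF T_nonneg T_le_P, of j] f_P_le_1_persists[OF assms that]
      by (intro P_Suc_le) linarith
  qed (fact P_nonneg)
  show "convergent T"
  proof (rule convergent_if_eventually_increasing[of k _ M])
    show "T j \<le> T (Suc j)" if "k \<le> j" for j
      using f_P_le_1_persists[OF assms, of "Suc j"] that by (intro T_le_Suc) simp
    show "T j \<le> M" for j
      using T_le_P[of j] P_le[of j] by linarith
  qed
qed

lemma convergent_P_T_if_amplified:
  assumes "\<And>k. 1 < f (P k)"
  shows "convergent P \<and> convergent T"
proof
  have T_decreasing: "T (Suc k) \<le> T k" for k
    using assms less_imp_le by (intro T_Suc_le) blast
  then show "convergent T"
    by (intro convergent_if_eventually_decreasing[of 0 _ 0] T_nonneg)
  show "convergent P"
  proof (cases "\<exists>k. f (T k) \<le> 1")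
    case True
    then obtain k where k: "f (T k) \<le> 1" ..
    have "P (Suc j) \<le> P j" if "k \<le> j" for j
    proof -
      have "T j \<le> T k"
        using that by (induction j rule: dec_induct) (auto intro: order_trans[OF T_decreasing])
      then show ?thesis
        using f_mono[OF T_nonneg, of j "T k"] k by (intro P_Suc_le) linarith
    qed
    then show ?thesis
      by (intro convergent_if_eventually_decreasing[of k _ 0] P_nonneg)
  next
    case False
    then have "P j \<le> P (Suc j)" for j
      using not_le_imp_less less_imp_le by (intro P_le_Suc) blast
    then show ?thesis
      by (intro convergent_if_eventually_increasing[of 0 _ M] P_le)
  qed
qed

lemma convergent_P_T: "convergent P \<and> convergent T"
  using convergent_P_T_if_damped convergent_P_T_if_amplified by (meson not_le)

lemma f_tendsto:
  assumes "X \<longlonglongrightarrow> L" and "\<And>k. 0 \<le> X k"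
  shows "(\<lambda>k. f (X k)) \<longlonglongrightarrow> f L"
proof -
  have "0 \<le> L"
    using assms by (meson LIMSEQ_le_const)
  then show ?thesis
    using assms by (intro continuous_on_tendsto_compose[OF f_continuous]) simp_all
qed

lemma limit_equations:
  assumes Lp: "P \<longlonglongrightarrow> Lp" and Lt: "T \<longlonglongrightarrow> Lt"
  shows "Lp - Lt = f Lt * (Lp - Lt)" and "Lp - Lt = min (f Lp * (Lp - Lt)) Lp"
proof -
  have "(\<lambda>k. P (Suc k) - T k) \<longlonglongrightarrow> Lp - Lt"
    using LIMSEQ_Suc[OF Lp] Lt by (rule tendsto_diff)
  moreover have "(\<lambda>k. P (Suc k) - T k) \<longlonglongrightarrow> f Lt * (Lp - Lt)"
    unfolding P_Suc by (rule tendsto_mult[OF f_tendsto[OF Lt T_nonneg] tendsto_diff[OF Lp Lt]])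
  ultimately show "Lp - Lt = f Lt * (Lp - Lt)"
    by (rule LIMSEQ_unique)
  have "(\<lambda>k. P (Suc k) - T (Suc k)) \<longlonglongrightarrow> Lp - Lt"
    using LIMSEQ_Suc[OF Lp] LIMSEQ_Suc[OF Lt] by (rule tendsto_diff)
  moreover have "(\<lambda>k. P (Suc k) - T (Suc k)) \<longlonglongrightarrow> min (f Lp * (Lp - Lt)) Lp"
    unfolding T_Suc
    by (intro tendsto_min tendsto_mult tendsto_diff f_tendsto[OF LIMSEQ_Suc[OF Lp] P_nonneg]
        LIMSEQ_Suc[OF Lp] Lt)
  ultimately show "Lp - Lt = min (f Lp * (Lp - Lt)) Lp"
    by (rule LIMSEQ_unique)
qed

lemma common_limit: "\<exists>L. P \<longlonglongrightarrow> L \<and> T \<longlonglongrightarrow> L"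
proof -
  obtain Lp Lt where Lp: "P \<longlonglongrightarrow> Lp" and Lt: "T \<longlonglongrightarrow> Lt"
    using convergent_P_T by (auto simp: convergent_def)
  have Lt_nonneg: "0 \<le> Lt"
    using Lt T_nonneg by (meson LIMSEQ_le_const)
  have "Lp = Lt"
  proof (rule ccontr)
    assume "Lp \<noteq> Lt"
    moreover have "Lt \<le> Lp"
      using LIMSEQ_le[OF Lt Lp] T_le_P by blast
    ultimately have gap: "0 < Lp - Lt" by simp
    with limit_equations(1)[OF Lp Lt] have "f Lt = 1" by simp
    moreover have "f Lt < f Lp"
      using strict_mono_onD[OF f_strict_mono, of Lt Lp] Lt_nonneg gap by simp
    ultimately have "Lp - Lt < f Lp * (Lp - Lt)"
      using gap by simp
    with limit_equations(2)[OF Lp Lt] have "Lt = 0"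
      by (simp add: min_def split: if_splits)
    with \<open>f Lt = 1\<close> f_0 show False by simp
  qed
  with Lp Lt show ?thesis by blast
qed

end

text \<open>
  The scenario in the variables \<open>a n = 1 + s_n/S\<close> and \<open>v n = u_n/S\<close>, with \<open>b = -\<phi>\<close> and
  \<open>p = 1 + \<zeta>\<close>.
\<close>

locale impact_recursion =
  fixes b :: real and p :: nat and a v :: "nat \<Rightarrow> real"
  assumes b_pos: "0 < b" and p_pos: "0 < p"
    and a_0_nonneg: "0 \<le> a 0"
    and a_Suc: "a (Suc n) = a n + v (Suc n)"
    and v_Suc: "v (Suc n) = max (- b * a n ^ p * v n) (- a n)"
begin

lemma a_nonneg: "0 \<le> a n"
  by (cases n) (simp_all add: a_0_nonneg a_Suc v_Suc)

lemma b_mult_a_pow_nonneg: "0 \<le> b * a n ^ p"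
  using b_pos a_nonneg[of n] by simp

lemma v_Suc_if_nonpos:
  assumes "v n \<le> 0"
  shows "v (Suc n) = - b * a n ^ p * v n"
  using v_Suc[of n] a_nonneg[of n] mult_nonneg_nonpos[OF b_mult_a_pow_nonneg[of n] assms] by simp

lemma v_Suc_nonneg: "v n \<le> 0 \<Longrightarrow> 0 \<le> v (Suc n)"
  using v_Suc_if_nonpos[of n] mult_nonneg_nonpos[OF b_mult_a_pow_nonneg[of n]] by simp

lemma v_Suc_nonpos: "0 \<le> v n \<Longrightarrow> v (Suc n) \<le> 0"
  using v_Suc[of n] b_mult_a_pow_nonneg[of n] a_nonneg[of n] by simp

lemma shift: "impact_recursion b p (\<lambda>n. a (Suc n)) (\<lambda>n. v (Suc n))"
  by unfold_locales (simp_all add: b_pos p_pos a_nonneg a_Suc v_Suc)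

lemma convergent_if_v_0_nonneg:
  assumes v_0: "0 \<le> v 0" and bounded: "\<And>n. a n \<le> M"
  shows "convergent a"
proof -
  have sign: "0 \<le> v (2 * k) \<and> v (2 * k + 1) \<le> 0" for k
    by (induction k) (simp_all add: v_0 v_Suc_nonneg v_Suc_nonpos)
  interpret peaks_troughs "\<lambda>y. b * y ^ p" "\<lambda>k. a (2 * k)" "\<lambda>k. a (2 * k + 1)" M
  proof unfold_locales
    show "0 \<le> b * 0 ^ p" "b * 0 ^ p < 1"
      using p_pos by (simp_all add: zero_power)
    show "strict_mono_on {0..} (\<lambda>y. b * y ^ p)"
      using b_pos p_pos by (auto intro!: strict_mono_onI power_strict_mono)
    show "continuous_on {0..} (\<lambda>y. b * y ^ p)"
      by (intro continuous_intros)
    show "0 \<le> a (2 * k + 1)" for k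
      by (rule a_nonneg)
    show "a (2 * k + 1) \<le> a (2 * k)" for k
      using a_Suc[of "2 * k"] sign[of k] by simp
    show "a (2 * k) \<le> M" for k
      by (rule bounded)
    show "a (2 * Suc k) - a (2 * k + 1) = b * a (2 * k + 1) ^ p * (a (2 * k) - a (2 * k + 1))" for k
      using a_Suc[of "2 * k"] a_Suc[of "2 * k + 1"] v_Suc_if_nonpos[of "2 * k + 1"] sign[of k] by simp
    show "a (2 * Suc k) - a (2 * Suc k + 1)
        = min (b * a (2 * Suc k) ^ p * (a (2 * Suc k) - a (2 * k + 1))) (a (2 * Suc k))" for k
      using a_Suc[of "2 * k + 1"] a_Suc[of "2 * Suc k"] v_Suc[of "2 * Suc k"] by (simp add: min_def max_def)
  qed
  obtain L where "(\<lambda>k. a (2 * k)) \<longlonglongrightarrow> L" "(\<lambda>k. a (2 * k + 1)) \<longlonglongrightarrow> L"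
    using common_limit by blast
  then show ?thesis
    by (blast intro: convergentI LIMSEQ_even_odd)
qed

lemma convergent_a:
  assumes "\<And>n. a n \<le> M"
  shows "convergent a"
proof (cases "0 \<le> v 0")
  case True
  show ?thesis
    using True assms by (rule convergent_if_v_0_nonneg)
next
  case False
  interpret shifted: impact_recursion b p "\<lambda>n. a (Suc n)" "\<lambda>n. v (Suc n)"
    by (rule shift)
  have "convergent (\<lambda>n. a (Suc n))"
    using False assms by (intro shifted.convergent_if_v_0_nonneg v_Suc_nonneg) simp_all
  then show ?thesis
    by (simp add: convergent_Suc_iff)
qed

end

lemma mi_s_0: "mi_s S zeta phi 0 x = max x (- S)"
  by (simp add: mi_s_def mi_u_0)

lemma mi_s_Suc: "mi_s S zeta phi (Suc n) x = mi_s S zeta phi n x + mi_u S zeta phi (Suc n) x"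
  by (simp add: mi_s_def)

lemma mi_s_ge: "- S \<le> mi_s S zeta phi n x"
  by (cases n) (simp_all add: mi_s_0 mi_s_Suc mi_u_Suc)

lemma mi_u_ge_start:
  assumes S: "0 < S" and phi: "1 \<le> phi" and x: "0 < x"
  shows "x \<le> mi_u S zeta phi n x"
proof -
  have "x \<le> mi_u S zeta phi n x \<and> 0 \<le> mi_s S zeta phi n x"
  proof (induction n)
    case 0
    then show ?case
      using S x by (simp add: mi_u_0 mi_s_0)
  next
    case (Suc n)
    have "1 \<le> (1 + mi_s S zeta phi n x / S) ^ (1 + zeta)"
      using Suc.IH S by (intro one_le_power) simp
    then have "1 \<le> phi * (1 + mi_s S zeta phi n x / S) ^ (1 + zeta)"
      using phi by (metis mult_mono' mult_1_left zero_le_one)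
    then have "mi_u S zeta phi n x \<le> phi * (1 + mi_s S zeta phi n x / S) ^ (1 + zeta) * mi_u S zeta phi n x"
      using Suc.IH x mult_right_mono[of 1 _ "mi_u S zeta phi n x"] by simp
    also have "\<dots> \<le> mi_u S zeta phi (Suc n) x"
      by (simp add: mi_u_Suc)
    finally show ?case
      using Suc.IH x by (simp add: mi_s_Suc)
  qed
  then show ?thesis ..
qed

lemma not_admissible_if_phi_ge_1:
  assumes S: "0 < S" and phi: "1 \<le> phi"
  shows "\<not> admissible S zeta phi"
proof
  assume "admissible S zeta phi"
  then obtain R where "0 < R" and summable: "summable (\<lambda>n. mi_u S zeta phi n (R / 2))"
    unfolding admissible_def by force
  then have "(\<lambda>n. mi_u S zeta phi n (R / 2)) \<longlonglongrightarrow> 0"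
    by (simp add: summable_LIMSEQ_zero)
  moreover have "R / 2 \<le> mi_u S zeta phi n (R / 2)" for n
    using S phi \<open>0 < R\<close> by (intro mi_u_ge_start) simp_all
  ultimately have "R / 2 \<le> 0"
    by (meson LIMSEQ_le_const)
  with \<open>0 < R\<close> show False by simp
qed

lemma sum_atMost_power_le:
  fixes q :: real
  assumes "0 \<le> q" and "q < 1"
  shows "(\<Sum>k\<le>m. q ^ k) \<le> 1 / (1 - q)"
proof -
  have "(\<Sum>k\<le>m. q ^ k) \<le> (\<Sum>k. q ^ k)"
    using assms by (intro sum_le_suminf summable_geometric) simp_all
  also have "\<dots> = 1 / (1 - q)"
    using assms by (intro suminf_geometric) simp
  finally show ?thesis .
qed

lemma abs_mi_u_Suc_le:
  assumes S: "0 < S" and small: "\<bar>mi_s S zeta phi n x\<bar> \<le> d * S"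
  shows "\<bar>mi_u S zeta phi (Suc n) x\<bar> \<le> \<bar>phi\<bar> * (1 + d) ^ (1 + zeta) * \<bar>mi_u S zeta phi n x\<bar>"
proof -
  define A where "A = 1 + mi_s S zeta phi n x / S"
  have "\<bar>A\<bar> \<le> 1 + \<bar>mi_s S zeta phi n x\<bar> / S"
    using S by (simp add: A_def abs_divide abs_triangle_ineq[THEN order_trans])
  also have "\<dots> \<le> 1 + d"
    using small S by (simp add: divide_le_eq)
  finally have A_le: "\<bar>A\<bar> \<le> 1 + d" .
  have "\<bar>max y z\<bar> \<le> \<bar>y\<bar>" if "z \<le> 0" for y z :: real
    using that by (auto simp: max_def)
  then have "\<bar>mi_u S zeta phi (Suc n) x\<bar> \<le> \<bar>phi * A ^ (1 + zeta) * mi_u S zeta phi n x\<bar>"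
    unfolding mi_u_Suc A_def using mi_s_ge[of S zeta phi n x] by simp
  also have "\<dots> = \<bar>phi\<bar> * \<bar>A\<bar> ^ (1 + zeta) * \<bar>mi_u S zeta phi n x\<bar>"
    by (simp add: abs_mult power_abs)
  also have "\<dots> \<le> \<bar>phi\<bar> * (1 + d) ^ (1 + zeta) * \<bar>mi_u S zeta phi n x\<bar>"
    using A_le by (intro mult_right_mono mult_left_mono power_mono) simp_all
  finally show ?thesis .
qed

lemma abs_mi_u_le_geometric:
  assumes S: "0 < S" and q: "\<bar>phi\<bar> * (1 + d) ^ (1 + zeta) \<le> q" "q < 1"
    and x: "\<bar>x\<bar> \<le> d * (1 - q) * S" "- S \<le> x"
  shows "\<bar>mi_u S zeta phi n x\<bar> \<le> q ^ n * \<bar>x\<bar>"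
proof -
  have "0 \<le> d * ((1 - q) * S)"
    using x(1) by (simp add: mult.assoc)
  moreover have "0 < (1 - q) * S"
    using q(2) S by simp
  ultimately have "0 \<le> d"
    by (auto simp: zero_le_mult_iff)
  then have q_nonneg: "0 \<le> q"
    using q(1) by (meson order_trans zero_le_mult_iff abs_ge_zero zero_le_power add_nonneg_nonneg zero_le_one)
  show ?thesis
  proof (induction n rule: less_induct)
    case (less n)
    show ?case
    proof (cases n)
      case 0
      then show ?thesis
        using x(2) by (simp add: mi_u_0)
    next
      case (Suc m)
      have "\<bar>mi_s S zeta phi m x\<bar> \<le> (\<Sum>k\<le>m. \<bar>mi_u S zeta phi k x\<bar>)"
        unfolding mi_s_def by (rule sum_abs)
      also have "\<dots> \<le> (\<Sum>k\<le>m. q ^ k) * \<bar>x\<bar>"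
        unfolding sum_distrib_right using less Suc by (intro sum_mono) simp
      also have "\<dots> \<le> \<bar>x\<bar> / (1 - q)"
        using mult_right_mono[OF sum_atMost_power_le[OF q_nonneg q(2)], of "\<bar>x\<bar>"] by simp
      also have "\<dots> \<le> d * S"
        using x(1) q(2) by (simp add: divide_le_eq mult.commute mult.left_commute)
      finally have "\<bar>mi_u S zeta phi (Suc m) x\<bar> \<le> \<bar>phi\<bar> * (1 + d) ^ (1 + zeta) * \<bar>mi_u S zeta phi m x\<bar>"
        by (rule abs_mi_u_Suc_le[OF S])
      also have "\<dots> \<le> q * (q ^ m * \<bar>x\<bar>)"
        using less[of m] Suc q(1) q_nonneg by (intro mult_mono) simp_all
      finally show ?thesis
        using Suc by simp
    qed
  qed
qed

lemma admissible_if_abs_phi_lt_1: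
  assumes S: "0 < S" and phi: "\<bar>phi\<bar> < 1"
  shows "admissible S zeta phi"
proof -
  have "((\<lambda>d. \<bar>phi\<bar> * (1 + d) ^ (1 + zeta)) \<longlongrightarrow> \<bar>phi\<bar>) (at_right 0)"
    by (auto intro!: tendsto_eq_intros)
  then have "eventually (\<lambda>d. \<bar>phi\<bar> * (1 + d) ^ (1 + zeta) < 1) (at_right 0)"
    using phi by (rule order_tendstoD)
  then obtain d where d: "0 < d" and q_lt_1: "\<bar>phi\<bar> * (1 + d) ^ (1 + zeta) < 1"
    unfolding eventually_at_right_field by (metis field_sum_of_halves half_gt_zero less_add_same_cancel1)
  define q where "q = \<bar>phi\<bar> * (1 + d) ^ (1 + zeta)"
  have q_nonneg: "0 \<le> q"
    using d by (simp add: q_def)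
  define R where "R = min S (d * (1 - q) * S)"
  have "0 < R"
    using S d q_lt_1 by (simp add: R_def q_def)
  show ?thesis
    unfolding admissible_def
  proof (intro exI[of _ R] conjI allI impI \<open>0 < R\<close>)
    fix x assume "- R < x \<and> x < R"
    then have "\<bar>x\<bar> \<le> d * (1 - q) * S" "- S \<le> x"
      by (auto simp: R_def)
    then have bound: "\<bar>mi_u S zeta phi n x\<bar> \<le> q ^ n * \<bar>x\<bar>" for n
      using q_lt_1 by (intro abs_mi_u_le_geometric[OF S]) (simp_all add: q_def)
    have "summable (\<lambda>n. q ^ n * \<bar>x\<bar>)"
      using q_lt_1 q_nonneg by (intro summable_mult2 summable_geometric) (simp add: q_def)
    then show "summable (\<lambda>n. mi_u S zeta phi n x)"
      by (rule summable_comparison_test'[where N = 0]) (simp add: bound)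
  qed
qed

lemma summable_mi_u_if_bounded:
  assumes S: "0 < S" and phi: "phi < 0" and bounded: "\<And>n. mi_s S zeta phi n x \<le> M"
  shows "summable (\<lambda>n. mi_u S zeta phi n x)"
proof -
  define a where "a n = 1 + mi_s S zeta phi n x / S" for n
  define v where "v n = mi_u S zeta phi n x / S" for n
  interpret impact_recursion "- phi" "1 + zeta" a v
  proof unfold_locales
    show "0 < - phi" "0 < 1 + zeta"
      using phi by simp_all
    show "0 \<le> a 0"
      using mi_s_ge[of S zeta phi 0 x] S by (simp add: a_def field_simps)
    show "a (Suc n) = a n + v (Suc n)" for n
      by (simp add: a_def v_def mi_s_Suc add_divide_distrib)
    show "v (Suc n) = max (- (- phi) * a n ^ (1 + zeta) * v n) (- a n)" for n
      using S by (simp add: a_def v_def mi_u_Suc max_divide_distrib_right diff_divide_distrib)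
  qed
  have "convergent a"
    using bounded S by (intro convergent_a[of "1 + M / S"]) (simp add: a_def divide_right_mono)
  then have "convergent (\<lambda>n. S * (a n - 1))"
    by (intro convergent_mult convergent_diff convergent_const)
  moreover have "S * (a n - 1) = (\<Sum>k\<le>n. mi_u S zeta phi k x)" for n
    using S by (simp add: a_def mi_s_def)
  ultimately show ?thesis
    by (simp add: summable_iff_convergent')
qed

lemma admissible_if_bounded:
  assumes S: "0 < S" and phi: "phi < 0"
    and bounded: "\<And>x. bounded (range (\<lambda>n. mi_s S zeta phi n x))"
  shows "admissible S zeta phi"
proof -
  have "summable (\<lambda>n. mi_u S zeta phi n x)" for x
  proof -
    obtain M where "\<forall>n. \<bar>mi_s S zeta phi n x\<bar> \<le> M"
      using bounded[of x] by (auto simp: bounded_real)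
    then show ?thesis
      using S phi by (intro summable_mi_u_if_bounded[of S phi zeta x M]) (auto dest: abs_le_D1)
  qed
  then show ?thesis
    unfolding admissible_def by (intro exI[of _ 1]) simp
qed

theorem theorem4p1:
  fixes S phi :: real and zeta :: nat
  assumes "S > 0" and "zeta \<in> {0, 1}"
  shows "(phi \<ge> 1 \<longrightarrow> \<not> admissible S zeta phi)
       \<and> (-1 < phi \<and> phi < 1 \<longrightarrow> admissible S zeta phi)
       \<and> (phi \<le> -1 \<and> (\<forall>x. bounded (range (\<lambda>n. mi_s S zeta phi n x)))
            \<longrightarrow> admissible S zeta phi)
       \<and> ((phi \<le> -1 \<longrightarrow> (\<forall>x. bounded (range (\<lambda>n. mi_s S zeta phi n x))))
            \<longrightarrow> (admissible S zeta phi \<longleftrightarrow> phi < 1))"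
  \<comment> \<open>The arguments work for every exponent.\<close>
proof -
  have a: "\<not> admissible S zeta phi" if "1 \<le> phi"
    using assms(1) that by (rule not_admissible_if_phi_ge_1)
  have b: "admissible S zeta phi" if "- 1 < phi" "phi < 1"
  proof (rule admissible_if_abs_phi_lt_1)
    show "\<bar>phi\<bar> < 1"
      using that by arith
  qed (fact assms(1))
  have c: "admissible S zeta phi" if "phi \<le> - 1" "\<forall>x. bounded (range (\<lambda>n. mi_s S zeta phi n x))"
    using assms(1) that by (intro admissible_if_bounded) simp_all
  show ?thesis
    using a b c by (meson linorder_not_le)
qed

end
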